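(* Let $I$ be an irreducible numerical semigroup. Then (1) the height of the tree $\mathrm{G}([\theta(I),I])$ equals $\#(I\setminus\theta(I))$; (2) if $S$ belongs to the $n$-level of $\mathrm{G}([\theta(I),I])$, then $\mathrm{l}(S)=2n+\mathrm{l}(I)$; (3) $\{\mathrm{l}(S)\mid S\in[\theta(I),I]\}=\{2n+\mathrm{l}(I)\mid n\in\{0,1,\ldots,\#(I\setminus\theta(I))\}\}$.
   Context: A numerical semigroup is a subset $S\subseteq\mathbb{N}$ closed under addition with $0\in S$ and $\mathbb{N}\setminus S$ finite; $\mathrm{F}(S)=\max(\mathbb{Z}\setminus S)$; $\langle X\rangle$ is the submonoid generated by $X$. Irreducible: not the intersection of two numerical semigroups properly containing it. $\mathrm{N}(S)=\{s\in S\mid s<\mathrm{F}(S)\}$, $\mathrm{L}(S)=\{x\in\mathbb{N}\setminus S\mid \mathrm{F}(S)-x\notin \mathrm{N}(S)\}$, $\mathrm{l}(S)=\#\mathrm{L}(S)$. $\Delta(S)=\{s\in S\mid s<\frac{\mathrm{F}(S)}{2}\}$ and $\theta(S)=\langle\Delta(S)\rangle\cup\{\mathrm{F}(S)+1,\mathrm{F}(S)+2,\ldots\}$. For numerical semigroups $A\subseteq B$, $[A,B]$ is the set of numerical semigroups $X$ with $A\subseteq X\subseteq B$; $\mathrm{F}_B(X)=\max(B\setminus X)$ if $X\subsetneq B$, $\mathrm{F}_B(B)=-1$. $\mathrm{G}([A,B])$ has vertex set $[A,B]$ and an edge $(X,Y)$ whenever $X\cup\{\mathrm{F}_B(X)\}=Y$;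 it is a rooted tree with root $B$. The depth of a vertex is the number of edges on its unique path to the root, the $n$-level is the set of vertices of depth $n$, and the height is the maximal depth. *)

theory Defs
  imports Main
begin

definition numerical_semigroup :: "nat set \<Rightarrow> bool" where
  "numerical_semigroup S \<longleftrightarrow> 0 \<in> S \<and> (\<forall>x\<in>S. \<forall>y\<in>S. x + y \<in> S) \<and> finite (UNIV - S)"

definition frob :: "nat set \<Rightarrow> int" where
  "frob S = (if UNIV - S = {} then -1 else int (Max (UNIV - S)))"

definition irreducible_ns :: "nat set \<Rightarrow> bool" where
  "irreducible_ns S \<longleftrightarrow> numerical_semigroup S \<and>
     \<not> (\<exists>S1 S2. numerical_semigroup S1 \<and> numerical_semigroup S2 \<and>
          S \<subset> S1 \<and> S \<subset> S2 \<and> S = S1 \<inter> S2)"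

inductive_set monoid_gen :: "nat set \<Rightarrow> nat set" for X :: "nat set" where
  zero: "0 \<in> monoid_gen X"
| gen: "x \<in> X \<Longrightarrow> x \<in> monoid_gen X"
| add: "a \<in> monoid_gen X \<Longrightarrow> b \<in> monoid_gen X \<Longrightarrow> a + b \<in> monoid_gen X"

definition NS :: "nat set \<Rightarrow> nat set" where
  "NS S = {s \<in> S. int s < frob S}"

definition LS :: "nat set \<Rightarrow> nat set" where
  "LS S = {x. x \<notin> S \<and> frob S - int x \<notin> int ` NS S}"

definition lS :: "nat set \<Rightarrow> nat" where
  "lS S = card (LS S)"

definition Delta :: "nat set \<Rightarrow> nat set" where
  "Delta S = {s \<in> S. 2 * int s < frob S}"

definition theta :: "nat set \<Rightarrow> nat set" where
  "theta S = monoid_gen (Delta S) \<union> {x. int x > frob S}"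

definition ns_interval :: "nat set \<Rightarrow> nat set \<Rightarrow> nat set set" where
  "ns_interval A B = {X. numerical_semigroup X \<and> A \<subseteq> X \<and> X \<subseteq> B}"

definition frob_rel :: "nat set \<Rightarrow> nat set \<Rightarrow> int" where
  "frob_rel B X = (if X \<subset> B then int (Max (B - X)) else -1)"

text \<open>Edge (X,Y) of G([A,B]): X \<union> {F_B(X)} = Y (requires X \<noteq> B, as F_B(B) = -1 is not in N).\<close>
definition tree_edge :: "nat set \<Rightarrow> nat set \<Rightarrow> nat set \<Rightarrow> nat set \<Rightarrow> bool" where
  "tree_edge A B X Y \<longleftrightarrow> X \<in> ns_interval A B \<and> Y \<in> ns_interval A B \<and>
     frob_rel B X \<ge> 0 \<and> insert (nat (frob_rel B X)) X = Y"

definition tree_depth :: "nat set \<Rightarrow> nat set \<Rightarrow> nat set \<Rightarrow> nat" where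
  "tree_depth A B X = (LEAST n. \<exists>f. f 0 = X \<and> f n = B \<and> (\<forall>i<n. tree_edge A B (f i) (f (Suc i))))"

definition tree_level :: "nat set \<Rightarrow> nat set \<Rightarrow> nat \<Rightarrow> nat set set" where
  "tree_level A B n = {X \<in> ns_interval A B. tree_depth A B X = n}"

definition tree_height :: "nat set \<Rightarrow> nat set \<Rightarrow> nat" where
  "tree_height A B = Max (tree_depth A B ` ns_interval A B)"

end

theory Submission
  imports Defs
begin

text \<open>
  Every \<open>S \<in> [\<theta>(I), I]\<close> contains all
  integers above \<open>f = F(I)\<close>, so \<open>F(S) = f\<close> and \<open>L(S) = {x \<notin> S. f - x \<notin> S}\<close>.
  Since \<open>f - y \<notin> I\<close> for every \<open>y \<in> I\<close> below \<open>f\<close>, this set splits disjointly as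
  \<open>L(I) \<union> (I \<setminus> S) \<union> (f - (I \<setminus> S))\<close>, whence \<open>l(S) = 2 #(I \<setminus> S) + l(I)\<close>.
  In any interval \<open>[A, B]\<close> the edge out of \<open>X\<close> adds one element of \<open>B \<setminus> X\<close>, so
  the depth of \<open>X\<close> is \<open>#(B \<setminus> X)\<close>, and iterating the edge from \<open>A\<close> realises every
  value between \<open>0\<close> and \<open>#(B \<setminus> A)\<close>.
\<close>

lemma numerical_semigroup_add:
  "numerical_semigroup S \<Longrightarrow> a \<in> S \<Longrightarrow> b \<in> S \<Longrightarrow> a + b \<in> S"
  unfolding numerical_semigroup_def by blast

lemma numerical_semigroup_finite_diff:
  "numerical_semigroup S \<Longrightarrow> finite (B - S)"
  unfolding numerical_semigroup_def by (rule finite_subset[rotated]) auto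

lemma gt_frob_in:
  assumes "finite (UNIV - S)" "frob S < int x"
  shows "x \<in> S"
  using assms Max_ge[OF assms(1), of x] unfolding frob_def by (auto split: if_splits)

lemma frob_notin:
  assumes "finite (UNIV - S)" "frob S = int f"
  shows "f \<notin> S"
proof -
  have "UNIV - S \<noteq> {}" using assms(2) unfolding frob_def by auto
  with assms show ?thesis using Max_in[OF assms(1)] unfolding frob_def by auto
qed

lemma frob_eqI:
  assumes "f \<notin> S" "\<And>x. f < x \<Longrightarrow> x \<in> S"
  shows "frob S = int f"
proof -
  have "UNIV - S \<subseteq> {..f}"
  proof
    fix x assume "x \<in> UNIV - S"
    then show "x \<in> {..f}" using assms(2)[of x] by (cases "f < x") auto
  qed
  moreover from this have "finite (UNIV - S)" by (rule finite_subset) simp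
  ultimately have "Max (UNIV - S) = f"
    using assms(1) by (intro Max_eqI) auto
  with assms(1) show ?thesis unfolding frob_def by auto
qed

lemma frob_diff_notin:
  assumes "numerical_semigroup I" "frob I = int f" "y \<in> I" "y \<le> f"
  shows "f - y \<notin> I"
  using numerical_semigroup_add[OF assms(1) assms(3)] assms frob_notin[of I f]
  by (metis le_add_diff_inverse numerical_semigroup_def)

lemma LS_eq:
  assumes "numerical_semigroup S" "frob S = int f"
  shows "LS S = {x. x \<notin> S \<and> f - x \<notin> S}"
proof -
  have "frob S - int x \<in> int ` NS S \<longleftrightarrow> f - x \<in> S" if "x \<notin> S" for x
  proof -
    have "\<not> frob S < int x" using that gt_frob_in[of S x] assms(1) by (auto simp: numerical_semigroup_def)
    then have "x \<le> f" using assms(2) by simp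
    moreover have "0 < x" using that assms(1) by (metis gr0I numerical_semigroup_def)
    ultimately have diff: "frob S - int x = int (f - x)" and "f - x < f" using assms(2) by simp_all
    then have "f - x \<in> NS S \<longleftrightarrow> f - x \<in> S" using assms(2) by (simp add: NS_def)
    then show ?thesis unfolding diff by (simp add: inj_image_mem_iff)
  qed
  then show ?thesis unfolding LS_def by auto
qed

lemma lS_between:
  assumes I: "numerical_semigroup I" and S: "numerical_semigroup S"
    and "S \<subseteq> I" and tail: "{x. frob I < int x} \<subseteq> S"
  shows "lS S = 2 * card (I - S) + lS I"
proof (cases "I = UNIV")
  case True
  then have "frob I = -1" unfolding frob_def by simp
  with True tail have "S = I" by auto
  then show ?thesis by simp
next
  case False
  define f where "f = Max (UNIV - I)"
  have fI: "frob I = int f" using False by (auto simp: frob_def f_def)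
  have f_notin: "f \<notin> I" using frob_notin[OF _ fI] I by (auto simp: numerical_semigroup_def)
  have fS: "frob S = int f"
    using \<open>S \<subseteq> I\<close> f_notin tail fI by (intro frob_eqI) auto
  have below: "y < f" if "y \<in> I - S" for y
    using that tail fI f_notin by (cases f y rule: linorder_cases) auto
  have mirror_notin: "f - y \<notin> I" if "y \<in> I - S" for y
    using frob_diff_notin[OF I fI] below[OF that] that by auto
  have mirror_mirror: "f - (f - y) = y" if "y \<in> I - S" for y
    using below[OF that] by simp
  have decomp: "LS S = LS I \<union> (I - S) \<union> (\<lambda>y. f - y) ` (I - S)"
  proof (intro equalityI subsetI)
    fix x assume "x \<in> LS S"
    then have x: "x \<notin> S" "f - x \<notin> S" by (simp_all add: LS_eq[OF S fS])
    have "\<not> frob S < int x" using x gt_frob_in[of S x] S by (auto simp: numerical_semigroup_def)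
    then have "x \<le> f" using fS by simp
    then have "x = f - (f - x)" by simp
    with x \<open>S \<subseteq> I\<close> show "x \<in> LS I \<union> (I - S) \<union> (\<lambda>y. f - y) ` (I - S)"
      by (cases "x \<in> I"; cases "f - x \<in> I") (auto simp: LS_eq[OF I fI])
  next
    fix x assume "x \<in> LS I \<union> (I - S) \<union> (\<lambda>y. f - y) ` (I - S)"
    then show "x \<in> LS S"
      using \<open>S \<subseteq> I\<close> mirror_notin mirror_mirror by (auto simp: LS_eq[OF I fI] LS_eq[OF S fS])
  qed
  have fin_LI: "finite (LS I)"
    using numerical_semigroup_finite_diff[OF I, of UNIV]
    by (rule finite_subset[rotated]) (auto simp: LS_eq[OF I fI])
  have fin_IS: "finite (I - S)" using numerical_semigroup_finite_diff[OF S] .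
  have inj: "inj_on (\<lambda>y. f - y) (I - S)"
    using below by (intro inj_onI) fastforce
  have "LS I \<inter> (I - S) = {}" by (auto simp: LS_eq[OF I fI])
  moreover have "(LS I \<union> (I - S)) \<inter> (\<lambda>y. f - y) ` (I - S) = {}"
    using mirror_notin mirror_mirror by (auto simp: LS_eq[OF I fI])
  ultimately have "card (LS S) = card (LS I) + card (I - S) + card ((\<lambda>y. f - y) ` (I - S))"
    unfolding decomp using fin_LI fin_IS by (simp add: card_Un_disjoint)
  then show ?thesis unfolding lS_def using card_image[OF inj] by simp
qed

lemma monoid_gen_subset:
  assumes "numerical_semigroup S" "X \<subseteq> S"
  shows "monoid_gen X \<subseteq> S"
proof
  fix x assume "x \<in> monoid_gen X"
  then show "x \<in> S"
    by induction (use assms in \<open>auto simp: numerical_semigroup_def\<close>)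
qed

lemma theta_subset:
  assumes "numerical_semigroup S"
  shows "theta S \<subseteq> S"
proof -
  have "monoid_gen (Delta S) \<subseteq> S" by (rule monoid_gen_subset[OF assms]) (auto simp: Delta_def)
  moreover have "{x. frob S < int x} \<subseteq> S"
    using gt_frob_in assms by (auto simp: numerical_semigroup_def)
  ultimately show ?thesis unfolding theta_def by blast
qed

lemma numerical_semigroup_theta: "numerical_semigroup (theta S)"
proof -
  have "UNIV - theta S \<subseteq> {..nat (frob S)}" unfolding theta_def by auto
  then have "finite (UNIV - theta S)" by (rule finite_subset) simp
  then show ?thesis
    unfolding numerical_semigroup_def by (auto simp: theta_def intro: monoid_gen.zero monoid_gen.add)
qed

definition parent :: "nat set \<Rightarrow> nat set \<Rightarrow> nat set" where
  "parent B X = insert (Max (B - X)) X"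

lemma Max_diff_in:
  assumes "numerical_semigroup X" "X \<subset> B"
  shows "Max (B - X) \<in> B - X"
  using assms numerical_semigroup_finite_diff by (intro Max_in) auto

lemma numerical_semigroup_parent:
  assumes X: "numerical_semigroup X" and B: "numerical_semigroup B" and "X \<subset> B"
  shows "numerical_semigroup (parent B X)"
proof -
  define m where "m = Max (B - X)"
  have m: "m \<in> B" "m \<notin> X" using Max_diff_in[OF X \<open>X \<subset> B\<close>] by (auto simp: m_def)
  have above_m: "z \<in> X" if "z \<in> B" "m < z" for z
    using that Max_ge[OF numerical_semigroup_finite_diff[OF X], of z B] by (auto simp: m_def)
  have "0 \<in> X" using X by (simp add: numerical_semigroup_def)
  have "a + b \<in> insert m X" if "a \<in> insert m X" "b \<in> insert m X" for a b
  proof (cases "(a \<in> X \<and> b \<in> X) \<or> a = 0 \<or> b = 0")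
    case True
    then show ?thesis using that numerical_semigroup_add[OF X] by auto
  next
    case False
    \<comment> \<open>then one summand is \<open>m\<close> and the other is positive, so the sum lies in \<open>B\<close> above \<open>m\<close>\<close>
    then have "m < a + b" using that by auto
    moreover have "a + b \<in> B"
      using that m \<open>X \<subset> B\<close> by (intro numerical_semigroup_add[OF B]) auto
    ultimately show ?thesis using above_m by blast
  qed
  moreover have "finite (UNIV - insert m X)"
    using numerical_semigroup_finite_diff[OF X, of UNIV] by (rule finite_subset[rotated]) blast
  ultimately show ?thesis
    using \<open>0 \<in> X\<close> unfolding parent_def m_def[symmetric] numerical_semigroup_def by blast
qed

lemma parent_in_interval:
  assumes "numerical_semigroup B" "X \<in> ns_interval A B" "X \<noteq> B"
  shows "parent B X \<in> ns_interval A B"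
  using assms numerical_semigroup_parent Max_diff_in[of X B]
  by (auto simp: ns_interval_def parent_def)

lemma card_diff_parent:
  assumes "X \<in> ns_interval A B" "X \<noteq> B"
  shows "card (B - parent B X) = card (B - X) - 1"
proof -
  have X: "numerical_semigroup X" "X \<subset> B" using assms by (auto simp: ns_interval_def)
  have "B - parent B X = (B - X) - {Max (B - X)}" unfolding parent_def by blast
  then show ?thesis
    using Max_diff_in[OF X] numerical_semigroup_finite_diff[OF X(1)] by simp
qed

lemma tree_edge_iff:
  assumes "numerical_semigroup B"
  shows "tree_edge A B X Y \<longleftrightarrow> X \<in> ns_interval A B \<and> X \<noteq> B \<and> Y = parent B X"
proof -
  have "X \<in> ns_interval A B \<Longrightarrow> X \<subset> B \<longleftrightarrow> X \<noteq> B" by (auto simp: ns_interval_def)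
  moreover have "0 \<le> frob_rel B X \<longleftrightarrow> X \<subset> B" by (simp add: frob_rel_def)
  moreover have "X \<subset> B \<Longrightarrow> nat (frob_rel B X) = Max (B - X)" by (simp add: frob_rel_def)
  ultimately show ?thesis
    using parent_in_interval[OF assms, of X A] unfolding tree_edge_def parent_def by metis
qed

lemma funpow_parent:
  assumes "numerical_semigroup B" "X \<in> ns_interval A B" "i \<le> card (B - X)"
  shows "(parent B ^^ i) X \<in> ns_interval A B \<and> card (B - (parent B ^^ i) X) = card (B - X) - i"
  using assms(3)
proof (induction i)
  case (Suc i)
  define Y where "Y = (parent B ^^ i) X"
  have Y: "Y \<in> ns_interval A B" "card (B - Y) = card (B - X) - i"
    using Suc by (simp_all add: Y_def)
  then have "Y \<noteq> B" using Suc.prems by auto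
  with Y show ?case
    using parent_in_interval[OF assms(1) Y(1)] card_diff_parent[OF Y(1)] by (simp add: Y_def)
qed (use assms(2) in simp)

lemma eq_if_card_diff_eq_0:
  "X \<in> ns_interval A B \<Longrightarrow> card (B - X) = 0 \<Longrightarrow> X = B"
  using numerical_semigroup_finite_diff[of X B] by (auto simp: ns_interval_def)

lemma card_diff_tree_edge:
  assumes B: "numerical_semigroup B" and "tree_edge A B X Y"
  shows "card (B - X) = Suc (card (B - Y))"
proof -
  have X: "X \<in> ns_interval A B" "X \<noteq> B" and Y: "Y = parent B X"
    using assms(2) by (simp_all add: tree_edge_iff[OF B])
  have "card (B - X) \<noteq> 0" using eq_if_card_diff_eq_0 X by blast
  then show ?thesis using card_diff_parent[OF X] Y by simp
qed

lemma tree_depth_eq_card_diff: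
  assumes B: "numerical_semigroup B" and X: "X \<in> ns_interval A B"
  shows "tree_depth A B X = card (B - X)"
  unfolding tree_depth_def
proof (rule Least_equality)
  let ?f = "\<lambda>i. (parent B ^^ i) X"
  have "?f (card (B - X)) \<in> ns_interval A B" "card (B - ?f (card (B - X))) = 0"
    using funpow_parent[OF B X, of "card (B - X)"] by simp_all
  then have "?f (card (B - X)) = B" by (rule eq_if_card_diff_eq_0)
  moreover have "tree_edge A B (?f i) (?f (Suc i))" if "i < card (B - X)" for i
    using that funpow_parent[OF B X, of i] by (auto simp: tree_edge_iff[OF B])
  ultimately show "\<exists>f. f 0 = X \<and> f (card (B - X)) = B \<and>
      (\<forall>i<card (B - X). tree_edge A B (f i) (f (Suc i)))"
    by (intro exI[of _ ?f]) auto
next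
  fix n assume "\<exists>f. f 0 = X \<and> f n = B \<and> (\<forall>i<n. tree_edge A B (f i) (f (Suc i)))"
  then obtain f where f: "f 0 = X" "f n = B" "\<forall>i<n. tree_edge A B (f i) (f (Suc i))" by blast
  have "card (B - X) = card (B - f i) + i" if "i \<le> n" for i
    using that
  proof (induction i)
    case (Suc i)
    then have "tree_edge A B (f i) (f (Suc i))" using f(3) by simp
    with Suc show ?case using card_diff_tree_edge[OF B] by simp
  qed (simp add: f(1))
  from this[of n] show "card (B - X) \<le> n" using f(2) by simp
qed

lemma card_diff_image_interval:
  assumes A: "numerical_semigroup A" and B: "numerical_semigroup B" and "A \<subseteq> B"
  shows "(\<lambda>X. card (B - X)) ` ns_interval A B = {..card (B - A)}"
proof (intro equalityI subsetI)
  fix n assume "n \<in> (\<lambda>X. card (B - X)) ` ns_interval A B"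
  then show "n \<in> {..card (B - A)}"
    using numerical_semigroup_finite_diff[OF A]
    by (auto simp: ns_interval_def intro: card_mono)
next
  fix n assume n: "n \<in> {..card (B - A)}"
  have "A \<in> ns_interval A B" using A \<open>A \<subseteq> B\<close> by (simp add: ns_interval_def)
  from funpow_parent[OF B this, of "card (B - A) - n"] n
  show "n \<in> (\<lambda>X. card (B - X)) ` ns_interval A B"
    by (intro image_eqI[of _ _ "(parent B ^^ (card (B - A) - n)) A"]) auto
qed

lemma tree_height_eq_card_diff:
  assumes A: "numerical_semigroup A" and B: "numerical_semigroup B" and "A \<subseteq> B"
  shows "tree_height A B = card (B - A)"
proof -
  have "tree_depth A B ` ns_interval A B = (\<lambda>X. card (B - X)) ` ns_interval A B"
    using tree_depth_eq_card_diff[OF B] by (intro image_cong) auto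
  then show ?thesis
    unfolding tree_height_def card_diff_image_interval[OF assms]
    by (intro Max_eqI) auto
qed

theorem proposition32:
  fixes I :: "nat set"
  assumes "irreducible_ns I"
  shows "tree_height (theta I) I = card (I - theta I) \<and>
    (\<forall>n S. S \<in> tree_level (theta I) I n \<longrightarrow> lS S = 2 * n + lS I) \<and>
    {lS S | S. S \<in> ns_interval (theta I) I} = {2 * n + lS I | n. n \<le> card (I - theta I)}"
proof -
  have I: "numerical_semigroup I" using assms by (simp add: irreducible_ns_def)
  note interval = numerical_semigroup_theta I theta_subset[OF I]
  have lS_eq: "lS S = 2 * card (I - S) + lS I" if "S \<in> ns_interval (theta I) I" for S
    using that by (intro lS_between[OF I]) (auto simp: ns_interval_def theta_def)
  have "lS ` ns_interval (theta I) I = (\<lambda>n. 2 * n + lS I) ` (\<lambda>X. card (I - X)) ` ns_interval (theta I) I"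
    unfolding image_image using lS_eq by (intro image_cong) auto
  then have "lS ` ns_interval (theta I) I = (\<lambda>n. 2 * n + lS I) ` {..card (I - theta I)}"
    by (simp only: card_diff_image_interval[OF interval])
  then show ?thesis
    using tree_height_eq_card_diff[OF interval] tree_depth_eq_card_diff[OF I] lS_eq
    by (auto simp: tree_level_def Setcompr_eq_image)
qed

end
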